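(* Consider a shallow ReLU network without biases with widths $n_0,n_1,n_2$ and activation patterns $A_1,\dots,A_k\in\{0,1\}^{n_1}$. For every $\lambda\in\mathbb{Z}^k$, the ideal $J^{\mathbf{A}}$ contains all $\big(|\operatorname{supp}(\sum_{i\in[k]}\lambda_iA_i)|+1\big)$-minors of the matrix $\sum_{i\in[k]}\lambda_iM_i$.
   Context: Parameters are $W^{(1)}\in\mathbb{R}^{n_1\times n_0}$, $W^{(2)}\in\mathbb{R}^{n_2\times n_1}$, and $M_A(\theta)=W^{(2)}\operatorname{diag}(A)W^{(1)}$. $J^{\mathbf{A}}\subseteq\mathbb{C}[m^{(i)}_{jl}: i\in[k], j\in[n_2], l\in[n_0]]$ is the ideal of all polynomials vanishing on the Zariski closure in $(\mathbb{C}^{n_2\times n_0})^k$ of $\{(M_{A_1}(\theta),\dots,M_{A_k}(\theta)):\theta\}$, where $M_i=(m^{(i)}_{jl})$ are coordinate matrices. $\operatorname{supp}(v)$ is the set of nonzero coordinates of $v\in\mathbb{Z}^{n_1}$. *)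

theory Defs
  imports Complex_Main "HOL-Library.Poly_Mapping" "HOL-Combinatorics.Permutations"
begin

text \<open>Variables m^(i)_{jl} are indexed by triples (i,j,l) (0-based: i<k, j<n2, l<n0).\<close>

type_synonym var = "nat \<times> nat \<times> nat"
type_synonym mpoly = "(var \<Rightarrow>\<^sub>0 nat) \<Rightarrow>\<^sub>0 complex"

definition mvar :: "var \<Rightarrow> mpoly" where
  "mvar v = Poly_Mapping.single (Poly_Mapping.single v 1) 1"

definition mpoly_vars :: "mpoly \<Rightarrow> var set" where
  "mpoly_vars p = (\<Union>m\<in>Poly_Mapping.keys p. Poly_Mapping.keys (m :: var \<Rightarrow>\<^sub>0 nat))"

definition mpoly_eval :: "mpoly \<Rightarrow> (var \<Rightarrow> complex) \<Rightarrow> complex" where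
  "mpoly_eval p x = (\<Sum>m\<in>Poly_Mapping.keys p. Poly_Mapping.lookup p m * (\<Prod>v\<in>Poly_Mapping.keys (m :: var \<Rightarrow>\<^sub>0 nat). x v ^ Poly_Mapping.lookup m v))"

definition coord_set :: "nat \<Rightarrow> nat \<Rightarrow> nat \<Rightarrow> var set" where
  "coord_set k n2 n0 = {(i,j,l). i < k \<and> j < n2 \<and> l < n0}"

text \<open>Points of the ambient space (C^{n2 x n0})^k: functions vanishing off the coordinate set.\<close>
definition ambient :: "nat \<Rightarrow> nat \<Rightarrow> nat \<Rightarrow> (var \<Rightarrow> complex) set" where
  "ambient k n2 n0 = {x. \<forall>v. v \<notin> coord_set k n2 n0 \<longrightarrow> x v = 0}"

definition poly_ring :: "nat \<Rightarrow> nat \<Rightarrow> nat \<Rightarrow> mpoly set" where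
  "poly_ring k n2 n0 = {p. mpoly_vars p \<subseteq> coord_set k n2 n0}"

definition zariski_closure :: "nat \<Rightarrow> nat \<Rightarrow> nat \<Rightarrow> (var \<Rightarrow> complex) set \<Rightarrow> (var \<Rightarrow> complex) set" where
  "zariski_closure k n2 n0 S = {x \<in> ambient k n2 n0.
      \<forall>p \<in> poly_ring k n2 n0. (\<forall>y\<in>S. mpoly_eval p y = 0) \<longrightarrow> mpoly_eval p x = 0}"

definition vanishing_ideal :: "nat \<Rightarrow> nat \<Rightarrow> nat \<Rightarrow> (var \<Rightarrow> complex) set \<Rightarrow> mpoly set" where
  "vanishing_ideal k n2 n0 V = {p \<in> poly_ring k n2 n0. \<forall>x\<in>V. mpoly_eval p x = 0}"

text \<open>M_A(theta) = W2 diag(A) W1 with W1 (n1 x n0), W2 (n2 x n1) real; A a 0/1 vector given as a predicate.\<close>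
definition net_matrix :: "nat \<Rightarrow> (nat \<Rightarrow> nat \<Rightarrow> real) \<Rightarrow> (nat \<Rightarrow> nat \<Rightarrow> real) \<Rightarrow> (nat \<Rightarrow> bool)
    \<Rightarrow> nat \<Rightarrow> nat \<Rightarrow> real" where
  "net_matrix n1 W1 W2 A j l = (\<Sum>r<n1. W2 j r * of_bool (A r) * W1 r l)"

definition param_point :: "nat \<Rightarrow> nat \<Rightarrow> nat \<Rightarrow> nat \<Rightarrow> (nat \<Rightarrow> nat \<Rightarrow> bool)
    \<Rightarrow> (nat \<Rightarrow> nat \<Rightarrow> real) \<Rightarrow> (nat \<Rightarrow> nat \<Rightarrow> real) \<Rightarrow> var \<Rightarrow> complex" where
  "param_point k n0 n1 n2 A W1 W2 = (\<lambda>(i,j,l).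
      if i < k \<and> j < n2 \<and> l < n0 then complex_of_real (net_matrix n1 W1 W2 (A i) j l) else 0)"

definition J_ideal :: "nat \<Rightarrow> nat \<Rightarrow> nat \<Rightarrow> nat \<Rightarrow> (nat \<Rightarrow> nat \<Rightarrow> bool) \<Rightarrow> mpoly set" where
  "J_ideal k n0 n1 n2 A = vanishing_ideal k n2 n0
     (zariski_closure k n2 n0 {param_point k n0 n1 n2 A W1 W2 | W1 W2. True})"

definition det_n :: "nat \<Rightarrow> (nat \<Rightarrow> nat \<Rightarrow> 'a::comm_ring_1) \<Rightarrow> 'a" where
  "det_n t B = (\<Sum>p | p permutes {..<t}. of_int (sign p) * (\<Prod>a<t. B a (p a)))"

definition minors :: "nat \<Rightarrow> nat \<Rightarrow> nat \<Rightarrow> (nat \<Rightarrow> nat \<Rightarrow> 'a::comm_ring_1) \<Rightarrow> 'a set" where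
  "minors t m n B = {det_n t (\<lambda>a b. B (rs a) (cs b)) | rs cs.
      strict_mono_on {..<t} rs \<and> strict_mono_on {..<t} cs \<and>
      (\<forall>a<t. rs a < m \<and> cs a < n)}"

definition supp_comb :: "nat \<Rightarrow> nat \<Rightarrow> (nat \<Rightarrow> int) \<Rightarrow> (nat \<Rightarrow> nat \<Rightarrow> bool) \<Rightarrow> nat set" where
  "supp_comb k n1 lam A = {r. r < n1 \<and> (\<Sum>i<k. lam i * of_bool (A i r)) \<noteq> 0}"

definition comb_matrix :: "nat \<Rightarrow> (nat \<Rightarrow> int) \<Rightarrow> nat \<Rightarrow> nat \<Rightarrow> mpoly" where
  "comb_matrix k lam j l = (\<Sum>i<k. of_int (lam i) * mvar (i, j, l))"

end

theory Submission
  imports Defs "Jordan_Normal_Form.Determinant"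
begin

(* At the parameter point of (W1, W2) the matrix \<Sum>i \<lambda>i Mi evaluates to W2 diag(c) W1 with
   c = \<Sum>i \<lambda>i Ai, a product that factors through the |supp c| coordinates where c is nonzero.
   A t x t matrix factoring through s < t coordinates is singular: pad both factors to t x t
   matrices; the right one then has a zero row. So every minor of size |supp c| + 1 vanishes on the
   image of the parametrization, hence on its Zariski closure. *)

lemma det_n_eq_det:
  fixes N :: "nat \<Rightarrow> nat \<Rightarrow> 'a::comm_ring_1"
  shows "det_n t N = det (mat t t (\<lambda>(a,b). N a b))"
proof -
  have "det (mat t t (\<lambda>(a,b). N a b)) = (\<Sum>p\<in>{p. p permutes {0..<t}}.
      of_int (sign p) * (\<Prod>i = 0..<t. mat t t (\<lambda>(a,b). N a b) $$ (i, p i)))"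
    by (rule det_def') simp
  also have "\<dots> = det_n t N"
    unfolding det_n_def lessThan_atLeast0
  proof (rule sum.cong[OF refl])
    fix p assume "p \<in> {p. p permutes {0..<t}}"
    then have "\<And>i. i < t \<Longrightarrow> p i < t" using permutes_in_image by fastforce
    then show "of_int (sign p) * (\<Prod>i = 0..<t. mat t t (\<lambda>(a,b). N a b) $$ (i, p i))
        = of_int (sign p) * (\<Prod>a = 0..<t. N a (p a))"
      by (auto intro!: prod.cong)
  qed
  finally show ?thesis by simp
qed

lemma det_n_cong:
  assumes "\<And>a b. a < t \<Longrightarrow> b < t \<Longrightarrow> N a b = N' a b"
  shows "det_n t N = det_n t N'"
  unfolding det_n_eq_det by (rule arg_cong[of _ _ det], rule eq_matI) (auto simp: assms)

lemma det_n_mult: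
  fixes B C :: "nat \<Rightarrow> nat \<Rightarrow> 'a::comm_ring_1"
  shows "det_n t (\<lambda>a b. \<Sum>q<t. B a q * C q b) = det_n t B * det_n t C"
proof -
  let ?B = "mat t t (\<lambda>(a,b). B a b)" and ?C = "mat t t (\<lambda>(a,b). C a b)"
  have "mat t t (\<lambda>(a,b). \<Sum>q<t. B a q * C q b) = ?B * ?C"
    by (rule eq_matI) (auto simp: scalar_prod_def lessThan_atLeast0 intro!: sum.cong)
  then show ?thesis
    unfolding det_n_eq_det by (simp add: det_mult[of ?B t ?C])
qed

lemma det_n_zero_row:
  assumes "i < t" and "\<And>b. b < t \<Longrightarrow> N i b = 0"
  shows "det_n t N = 0"
  unfolding det_n_def
proof (rule sum.neutral, intro ballI)
  fix p assume "p \<in> {p. p permutes {..<t}}"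
  then have "p i < t" using assms(1) permutes_in_image by fastforce
  then have "(\<Prod>a<t. N a (p a)) = 0"
    using assms by (intro prod_zero) (auto intro!: bexI[of _ i])
  then show "of_int (sign p) * (\<Prod>a<t. N a (p a)) = 0"
    by simp
qed

lemma det_n_factorization_eq_0:
  fixes U :: "nat \<Rightarrow> 'b \<Rightarrow> 'a::comm_ring_1" and V :: "'b \<Rightarrow> nat \<Rightarrow> 'a"
  assumes "finite S" and "card S < t"
    and N: "\<And>a b. a < t \<Longrightarrow> b < t \<Longrightarrow> N a b = (\<Sum>q\<in>S. U a q * V q b)"
  shows "det_n t N = 0"
proof -
  define s where "s = card S"
  obtain e where e: "bij_betw e {..<s} S"
    using ex_bij_betw_nat_finite[OF \<open>finite S\<close>] by (auto simp: s_def lessThan_atLeast0)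
  define B where "B a q = (if q < s then U a (e q) else 0)" for a q
  define C where "C q b = (if q < s then V (e q) b else 0)" for q b
  have "det_n t N = det_n t (\<lambda>a b. \<Sum>q<t. B a q * C q b)"
  proof (rule det_n_cong)
    fix a b assume "a < t" "b < t"
    have "N a b = (\<Sum>q<s. U a (e q) * V (e q) b)"
      unfolding N[OF \<open>a < t\<close> \<open>b < t\<close>] by (rule sum.reindex_bij_betw[OF e, symmetric])
    also have "\<dots> = (\<Sum>q<t. B a q * C q b)"
      using \<open>card S < t\<close> by (intro sum.mono_neutral_cong_left) (auto simp: s_def B_def C_def)
    finally show "N a b = (\<Sum>q<t. B a q * C q b)" .
  qed
  also have "\<dots> = det_n t B * det_n t C"
    by (rule det_n_mult)
  also have "det_n t C = 0"
    using \<open>card S < t\<close> by (intro det_n_zero_row[of s]) (auto simp: s_def C_def)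
  finally show ?thesis by simp
qed

lemma minors_factorization_eq_0:
  fixes U :: "nat \<Rightarrow> 'b \<Rightarrow> 'a::comm_ring_1" and V :: "'b \<Rightarrow> nat \<Rightarrow> 'a"
  assumes "finite S" and "card S < t"
    and B: "\<And>a b. a < m \<Longrightarrow> b < n \<Longrightarrow> B a b = (\<Sum>q\<in>S. U a q * V q b)"
    and "x \<in> minors t m n B"
  shows "x = 0"
proof -
  obtain rs cs where x: "x = det_n t (\<lambda>a b. B (rs a) (cs b))"
    and rc: "\<And>a. a < t \<Longrightarrow> rs a < m \<and> cs a < n"
    using \<open>x \<in> minors t m n B\<close> unfolding minors_def by blast
  show ?thesis
    unfolding x using assms(1,2)
    by (rule det_n_factorization_eq_0[where U = "\<lambda>a. U (rs a)" and V = "\<lambda>q b. V q (cs b)"])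
      (simp add: B rc)
qed

lemma (in comm_ring_hom) hom_det_n: "hom (det_n t B) = det_n t (\<lambda>a b. hom (B a b))"
  unfolding det_n_def by (simp add: hom_distribs)

lemma (in comm_ring_hom) hom_minors: "hom ` minors t m n B = minors t m n (\<lambda>a b. hom (B a b))"
  unfolding minors_def image_Collect by (auto simp: hom_det_n) (metis hom_det_n)+

definition monom_eval :: "(var \<Rightarrow>\<^sub>0 nat) \<Rightarrow> (var \<Rightarrow> complex) \<Rightarrow> complex" where
  "monom_eval m x = (\<Prod>v\<in>Poly_Mapping.keys m. x v ^ Poly_Mapping.lookup m v)"

lemma monom_eval_superset:
  "finite K \<Longrightarrow> Poly_Mapping.keys m \<subseteq> K \<Longrightarrow>
    monom_eval m x = (\<Prod>v\<in>K. x v ^ Poly_Mapping.lookup m v)"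
  unfolding monom_eval_def by (rule prod.mono_neutral_left) (auto simp: in_keys_iff)

lemma monom_eval_add: "monom_eval (m + m') x = monom_eval m x * monom_eval m' x"
proof -
  let ?K = "Poly_Mapping.keys m \<union> Poly_Mapping.keys m'"
  have "monom_eval (m + m') x = (\<Prod>v\<in>?K. x v ^ Poly_Mapping.lookup (m + m') v)"
    using keys_add[of m m'] by (intro monom_eval_superset) auto
  also have "\<dots> = (\<Prod>v\<in>?K. x v ^ Poly_Mapping.lookup m v * x v ^ Poly_Mapping.lookup m' v)"
    by (simp add: lookup_add power_add)
  also have "\<dots> = monom_eval m x * monom_eval m' x"
    by (simp add: prod.distrib monom_eval_superset[of ?K m x] monom_eval_superset[of ?K m' x])
  finally show ?thesis .
qed

lemma mpoly_eval_superset: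
  "finite K \<Longrightarrow> Poly_Mapping.keys p \<subseteq> K \<Longrightarrow>
    mpoly_eval p x = (\<Sum>m\<in>K. Poly_Mapping.lookup p m * monom_eval m x)"
  unfolding mpoly_eval_def monom_eval_def by (rule sum.mono_neutral_left) (auto simp: in_keys_iff)

lemma mpoly_eval_single: "mpoly_eval (Poly_Mapping.single m c) x = c * monom_eval m x"
  unfolding mpoly_eval_def monom_eval_def by simp

lemma mpoly_eval_0: "mpoly_eval 0 x = 0"
  unfolding mpoly_eval_def by simp

lemma mpoly_eval_add: "mpoly_eval (p + q) x = mpoly_eval p x + mpoly_eval q x"
proof -
  let ?K = "Poly_Mapping.keys p \<union> Poly_Mapping.keys q"
  have "mpoly_eval (p + q) x = (\<Sum>m\<in>?K. Poly_Mapping.lookup (p + q) m * monom_eval m x)"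
    using keys_add[of p q] by (intro mpoly_eval_superset) auto
  also have "\<dots> = mpoly_eval p x + mpoly_eval q x"
    by (simp add: lookup_add distrib_right sum.distrib
        mpoly_eval_superset[of ?K p x] mpoly_eval_superset[of ?K q x])
  finally show ?thesis .
qed

lemma mpoly_eq_sum_single:
  "(p :: mpoly) = (\<Sum>m\<in>Poly_Mapping.keys p. Poly_Mapping.single m (Poly_Mapping.lookup p m))"
  by (rule poly_mapping_eqI) (simp add: lookup_sum lookup_single when_def in_keys_iff)

lemma mpoly_eval_mult: "mpoly_eval (p * q) x = mpoly_eval p x * mpoly_eval q x"
proof -
  have eval_sum: "mpoly_eval (\<Sum>i\<in>I. f i) x = (\<Sum>i\<in>I. mpoly_eval (f i) x)"
    for I and f :: "_ \<Rightarrow> mpoly"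
    by (induction I rule: infinite_finite_induct) (simp_all add: mpoly_eval_0 mpoly_eval_add)
  have "p * q = (\<Sum>a\<in>Poly_Mapping.keys p. \<Sum>b\<in>Poly_Mapping.keys q.
      Poly_Mapping.single (a + b) (Poly_Mapping.lookup p a * Poly_Mapping.lookup q b))"
    by (subst mpoly_eq_sum_single[of p], subst mpoly_eq_sum_single[of q])
      (simp add: sum_product mult_single)
  then have "mpoly_eval (p * q) x = (\<Sum>a\<in>Poly_Mapping.keys p. \<Sum>b\<in>Poly_Mapping.keys q.
      (Poly_Mapping.lookup p a * monom_eval a x) * (Poly_Mapping.lookup q b * monom_eval b x))"
    by (simp add: eval_sum mpoly_eval_single monom_eval_add mult_ac)
  also have "\<dots> = mpoly_eval p x * mpoly_eval q x"
    by (simp add: sum_product mpoly_eval_superset[of "Poly_Mapping.keys p" p x]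
        mpoly_eval_superset[of "Poly_Mapping.keys q" q x])
  finally show ?thesis .
qed

interpretation mpoly_eval_hom: comm_ring_hom "\<lambda>p. mpoly_eval p x" for x
proof
  show "mpoly_eval 1 x = 1"
    using mpoly_eval_single[of 0 1 x] by (simp add: monom_eval_def)
qed (simp_all add: mpoly_eval_0 mpoly_eval_add mpoly_eval_mult)

lemma mpoly_eval_mvar: "mpoly_eval (mvar v) x = x v"
  unfolding mvar_def mpoly_eval_single monom_eval_def by simp

lemma mpoly_vars_add: "mpoly_vars (p + q) \<subseteq> mpoly_vars p \<union> mpoly_vars q"
  unfolding mpoly_vars_def using keys_add[of p q] by auto

lemma mpoly_vars_mult: "mpoly_vars (p * q) \<subseteq> mpoly_vars p \<union> mpoly_vars q"
proof
  fix v assume "v \<in> mpoly_vars (p * q)"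
  then obtain m where m: "m \<in> Poly_Mapping.keys (p * q)" "v \<in> Poly_Mapping.keys m"
    unfolding mpoly_vars_def by blast
  from m(1) keys_mult[of p q] obtain a b where ab: "m = a + b"
    "a \<in> Poly_Mapping.keys p" "b \<in> Poly_Mapping.keys q"
    by blast
  have "v \<in> Poly_Mapping.keys a \<union> Poly_Mapping.keys b"
    using m(2) keys_add[of a b] unfolding ab(1) by blast
  then show "v \<in> mpoly_vars p \<union> mpoly_vars q"
    using ab unfolding mpoly_vars_def by blast
qed

lemma mpoly_vars_sum:
  "(\<And>i. i \<in> I \<Longrightarrow> mpoly_vars (f i) \<subseteq> V) \<Longrightarrow> mpoly_vars (\<Sum>i\<in>I. f i) \<subseteq> V"
proof (induction I rule: infinite_finite_induct)
  case (insert i I)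
  then show ?case using mpoly_vars_add[of "f i" "sum f I"] by auto
qed (simp_all add: mpoly_vars_def)

lemma mpoly_vars_prod:
  "(\<And>i. i \<in> I \<Longrightarrow> mpoly_vars (f i) \<subseteq> V) \<Longrightarrow> mpoly_vars (\<Prod>i\<in>I. f i) \<subseteq> V"
proof (induction I rule: infinite_finite_induct)
  case (insert i I)
  then show ?case using mpoly_vars_mult[of "f i" "prod f I"] by auto
qed (simp_all add: mpoly_vars_def)

lemma mpoly_vars_of_int: "mpoly_vars (of_int z) = {}"
proof -
  have "Poly_Mapping.keys (of_int z :: mpoly) \<subseteq> {0}"
    by (auto simp: in_keys_iff lookup_of_int when_def split: if_splits)
  then show ?thesis unfolding mpoly_vars_def by auto
qed

lemma mpoly_vars_mvar: "mpoly_vars (mvar v) = {v}"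
  unfolding mpoly_vars_def mvar_def by simp

lemma mpoly_vars_det_n:
  assumes "\<And>a b. a < t \<Longrightarrow> b < t \<Longrightarrow> mpoly_vars (B a b) \<subseteq> V"
  shows "mpoly_vars (det_n t B) \<subseteq> V"
  unfolding det_n_def
proof (rule mpoly_vars_sum)
  fix p assume "p \<in> {p. p permutes {..<t}}"
  then have "\<And>a. a < t \<Longrightarrow> p a < t" using permutes_in_image by fastforce
  then have "mpoly_vars (\<Prod>a<t. B a (p a)) \<subseteq> V"
    using assms by (intro mpoly_vars_prod) auto
  then show "mpoly_vars (of_int (sign p) * (\<Prod>a<t. B a (p a))) \<subseteq> V"
    using mpoly_vars_mult[of "of_int (sign p)"] by (auto simp: mpoly_vars_of_int)
qed

lemma mpoly_vars_minors:
  assumes "\<And>a b. a < m \<Longrightarrow> b < n \<Longrightarrow> mpoly_vars (B a b) \<subseteq> V"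
    and "p \<in> minors t m n B"
  shows "mpoly_vars p \<subseteq> V"
proof -
  obtain rs cs where p: "p = det_n t (\<lambda>a b. B (rs a) (cs b))"
    and rc: "\<And>a. a < t \<Longrightarrow> rs a < m \<and> cs a < n"
    using assms(2) unfolding minors_def by blast
  show ?thesis
    unfolding p by (rule mpoly_vars_det_n) (simp add: assms(1) rc)
qed

lemma in_vanishing_ideal_zariski_closureI:
  assumes "p \<in> poly_ring k n2 n0" and "\<And>y. y \<in> S \<Longrightarrow> mpoly_eval p y = 0"
  shows "p \<in> vanishing_ideal k n2 n0 (zariski_closure k n2 n0 S)"
  using assms unfolding vanishing_ideal_def zariski_closure_def by blast

lemma mpoly_vars_comb_matrix:
  assumes "j < n2" and "l < n0"
  shows "mpoly_vars (comb_matrix k lam j l) \<subseteq> coord_set k n2 n0"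
  unfolding comb_matrix_def
proof (rule mpoly_vars_sum)
  fix i assume "i \<in> {..<k}"
  then show "mpoly_vars (of_int (lam i) * mvar (i, j, l)) \<subseteq> coord_set k n2 n0"
    using mpoly_vars_mult[of "of_int (lam i)" "mvar (i, j, l)"] assms
    by (auto simp: mpoly_vars_of_int mpoly_vars_mvar coord_set_def)
qed

lemma mpoly_eval_comb_matrix_param_point:
  assumes "j < n2" and "l < n0"
  shows "mpoly_eval (comb_matrix k lam j l) (param_point k n0 n1 n2 A W1 W2)
    = (\<Sum>r\<in>supp_comb k n1 lam A.
         (complex_of_real (W2 j r) * of_int (\<Sum>i<k. lam i * of_bool (A i r))) * complex_of_real (W1 r l))"
proof -
  let ?y = "param_point k n0 n1 n2 A W1 W2"
  let ?c = "\<lambda>r. \<Sum>i<k. lam i * of_bool (A i r)"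
  have of_real_of_bool: "complex_of_real (of_bool b) = of_bool b" for b
    by (cases b) simp_all
  have "mpoly_eval (comb_matrix k lam j l) ?y = (\<Sum>i<k. of_int (lam i) * ?y (i, j, l))"
    unfolding comb_matrix_def
    by (simp add: mpoly_eval_hom.hom_sum mpoly_eval_hom.hom_mult mpoly_eval_hom.hom_of_int
        mpoly_eval_mvar)
  also have "\<dots> = (\<Sum>i<k. \<Sum>r<n1.
      complex_of_real (W2 j r) * (of_int (lam i) * of_bool (A i r)) * complex_of_real (W1 r l))"
    using assms
    by (intro sum.cong refl)
      (simp add: param_point_def net_matrix_def of_real_of_bool sum_distrib_left mult_ac)
  also have "\<dots> = (\<Sum>r<n1. \<Sum>i<k.
      complex_of_real (W2 j r) * (of_int (lam i) * of_bool (A i r)) * complex_of_real (W1 r l))"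
    by (rule sum.swap)
  also have "\<dots> = (\<Sum>r<n1. (complex_of_real (W2 j r) * of_int (?c r)) * complex_of_real (W1 r l))"
    by (intro sum.cong refl)
      (simp only: of_int_sum of_int_mult of_int_of_bool sum_distrib_left sum_distrib_right)
  also have "\<dots> = (\<Sum>r\<in>supp_comb k n1 lam A.
      (complex_of_real (W2 j r) * of_int (?c r)) * complex_of_real (W1 r l))"
    by (rule sum.mono_neutral_right) (auto simp: supp_comb_def)
  finally show ?thesis .
qed

lemma finite_supp_comb: "finite (supp_comb k n1 lam A)"
  unfolding supp_comb_def by simp

theorem theorem7p1:
  fixes k n0 n1 n2 :: nat
    and A :: "nat \<Rightarrow> nat \<Rightarrow> bool"
    and lam :: "nat \<Rightarrow> int"
  shows "minors (card (supp_comb k n1 lam A) + 1) n2 n0 (comb_matrix k lam)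
           \<subseteq> J_ideal k n0 n1 n2 A"
proof
  let ?S = "supp_comb k n1 lam A"
  let ?t = "card ?S + 1"
  fix p assume p: "p \<in> minors ?t n2 n0 (comb_matrix k lam)"
  have "p \<in> poly_ring k n2 n0"
    unfolding poly_ring_def mem_Collect_eq by (rule mpoly_vars_minors[OF mpoly_vars_comb_matrix p])
  moreover have "mpoly_eval p y = 0"
    if y_image: "y \<in> {param_point k n0 n1 n2 A W1 W2 | W1 W2. True}" for y
  proof -
    obtain W1 W2 where y: "y = param_point k n0 n1 n2 A W1 W2"
      using y_image by blast
    have "mpoly_eval p y \<in> (\<lambda>q. mpoly_eval q y) ` minors ?t n2 n0 (comb_matrix k lam)"
      using p by (rule imageI)
    then have minor: "mpoly_eval p y \<in> minors ?t n2 n0 (\<lambda>j l. mpoly_eval (comb_matrix k lam j l) y)"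
      by (simp only: mpoly_eval_hom.hom_minors)
    show ?thesis
      using minor unfolding y
      by (intro minors_factorization_eq_0[where S = ?S
            and U = "\<lambda>j r. complex_of_real (W2 j r) * of_int (\<Sum>i<k. lam i * of_bool (A i r))"
            and V = "\<lambda>r l. complex_of_real (W1 r l)"])
        (simp_all only: finite_supp_comb mpoly_eval_comb_matrix_param_point less_add_one)
  qed
  ultimately show "p \<in> J_ideal k n0 n1 n2 A"
    unfolding J_ideal_def by (rule in_vanishing_ideal_zariski_closureI)
qed

end
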